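(* For every integer $n \geq 8$, $h(n,5) \leq \frac{7n + c(n \bmod 6)}{6}$, where $c(0)=0$, $c(1)=35$, $c(2)=16$, $c(3)=27$, $c(4)=8$, $c(5)=28$.
   Context: All graphs are finite and simple. A degree monotone path in a graph $G$ is a path $v_1v_2\ldots v_m$ such that $\deg(v_1)\le \cdots\le \deg(v_m)$ or $\deg(v_1)\ge \cdots\ge \deg(v_m)$; its length is its number of vertices. $mp(G)$ denotes the maximum length of a degree monotone path in $G$. For a pair $e$ of non-adjacent vertices, $G+e$ is $G$ with the edge $e$ added. A graph $G$ is $k$-saturated if $mp(G)\le k-1$ and $mp(G+e)\ge k$ for every pair $e$ of non-adjacent vertices of $G$ (so $K_m$ is $k$-saturated for $m\le k-1$). $h(n,k)$ is the minimum number of edges of a $k$-saturated graph on $n$ vertices. *)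

theory Defs
  imports Complex_Main "HOL-Library.Extended_Nat"
begin

definition simple_graph :: "nat \<Rightarrow> nat set set \<Rightarrow> bool" where
  "simple_graph n E \<longleftrightarrow> (\<forall>e\<in>E. \<exists>u v. e = {u, v} \<and> u \<noteq> v \<and> u < n \<and> v < n)"

definition deg :: "nat set set \<Rightarrow> nat \<Rightarrow> nat" where
  "deg E v = card {u. {u, v} \<in> E}"

definition is_path :: "nat \<Rightarrow> nat set set \<Rightarrow> nat list \<Rightarrow> bool" where
  "is_path n E xs \<longleftrightarrow> distinct xs \<and> set xs \<subseteq> {0..<n}
     \<and> (\<forall>i. Suc i < length xs \<longrightarrow> {xs ! i, xs ! Suc i} \<in> E)"

definition degree_monotone_path :: "nat \<Rightarrow> nat set set \<Rightarrow> nat list \<Rightarrow> bool" where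
  "degree_monotone_path n E xs \<longleftrightarrow> is_path n E xs \<and>
     (sorted (map (deg E) xs) \<or> sorted (rev (map (deg E) xs)))"

(* length = number of vertices *)
definition mp :: "nat \<Rightarrow> nat set set \<Rightarrow> nat" where
  "mp n E = Max (length ` {xs. degree_monotone_path n E xs})"

definition saturated :: "nat \<Rightarrow> nat \<Rightarrow> nat set set \<Rightarrow> bool" where
  "saturated k n E \<longleftrightarrow> simple_graph n E \<and> mp n E \<le> k - 1 \<and>
     (\<forall>u v. u < n \<longrightarrow> v < n \<longrightarrow> u \<noteq> v \<longrightarrow> {u, v} \<notin> E \<longrightarrow> mp n (insert {u, v} E) \<ge> k)"

(* minimum number of edges of a k-saturated graph on n vertices (\<infinity> if none exists) *)
definition h :: "nat \<Rightarrow> nat \<Rightarrow> enat" where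
  "h n k = Inf {enat (card E) | E. saturated k n E}"

definition c :: "nat \<Rightarrow> nat" where
  "c r = (if r = 0 then 0 else if r = 1 then 35 else if r = 2 then 16
          else if r = 3 then 27 else if r = 4 then 8 else 28)"

end

(* The extremal graph is a disjoint union of blocks: K4, K5 minus an edge, and the hexagon
   with a long diagonal, carrying 6, 9 and 7 edges on 4, 5 and 6 vertices. All but at most three
   blocks are hexagons, giving 7/6 edges per vertex, and the few small blocks fixing n mod 6 cost
   the additive c (n mod 6).

   A path of the union stays inside one block, and no block has a degree monotone path on 5
   vertices, so mp <= 4. Adding an edge inside a block or between two blocks creates such a path;
   since only the one or two blocks touched by the new edge matter, both facts reduce to finitely
   many small graphs. These are checked by exhaustive search, and it suffices to search for paths
   with nondecreasing degrees, since a nonincreasing path reversed is nondecreasing. *)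

theory Submission
  imports Defs
begin

definition nondec_path :: "'a list \<Rightarrow> ('a \<Rightarrow> 'a \<Rightarrow> bool) \<Rightarrow> ('a \<Rightarrow> nat) \<Rightarrow> 'a list \<Rightarrow> bool" where
  "nondec_path V adj d p \<longleftrightarrow> distinct p \<and> set p \<subseteq> set V \<and> successively adj p \<and> sorted (map d p)"

lemma nondec_path_Nil [simp]: "nondec_path V adj d []"
  by (simp add: nondec_path_def)

lemma nondec_path_Cons:
  "nondec_path V adj d (x # p) \<longleftrightarrow>
     x \<in> set V \<and> x \<notin> set p \<and> (p = [] \<or> adj x (hd p) \<and> d x \<le> d (hd p)) \<and> nondec_path V adj d p"
  by (cases p) (auto simp: nondec_path_def)

lemma nondec_path_appendD:
  assumes "nondec_path V adj d (p @ q)"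
  shows "nondec_path V adj d p" "nondec_path V adj d q"
  using assms by (auto simp: nondec_path_def successively_append_iff sorted_append)

lemma nondec_path_map:
  assumes "nondec_path V adj d p" and "inj_on f (set p)" and "f ` set p \<subseteq> set W"
    and "\<And>x y. x \<in> set p \<Longrightarrow> y \<in> set p \<Longrightarrow> adj x y \<Longrightarrow> adj' (f x) (f y)"
    and "\<And>x. x \<in> set p \<Longrightarrow> d' (f x) = d x"
  shows "nondec_path W adj' d' (map f p)"
proof -
  have degs: "map (d' \<circ> f) p = map d p" using assms(5) by simp
  show ?thesis
    using assms(1-4) unfolding nondec_path_def map_map degs
    by (auto simp: distinct_map successively_map elim: successively_mono)
qed

fun extendable :: "'a list \<Rightarrow> ('a \<Rightarrow> 'a \<Rightarrow> bool) \<Rightarrow> ('a \<Rightarrow> nat) \<Rightarrow> nat \<Rightarrow> 'a list \<Rightarrow> bool" where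
  "extendable V adj d 0 p = True"
| "extendable V adj d (Suc k) p = list_ex (\<lambda>x. x \<notin> set p \<and> (p = [] \<or> adj x (hd p) \<and> d x \<le> d (hd p))
      \<and> extendable V adj d k (x # p)) V"

lemma extendable_iff:
  assumes "nondec_path V adj d p"
  shows "extendable V adj d k p \<longleftrightarrow> (\<exists>q. length q = k \<and> nondec_path V adj d (q @ p))"
  using assms
proof (induction k arbitrary: p)
  case (Suc k)
  have "extendable V adj d (Suc k) p \<longleftrightarrow> (\<exists>x. nondec_path V adj d (x # p) \<and> extendable V adj d k (x # p))"
    using Suc.prems by (auto simp: list_ex_iff nondec_path_Cons)
  also have "\<dots> \<longleftrightarrow> (\<exists>x q. length q = k \<and> nondec_path V adj d (q @ x # p))"
    using Suc.IH by (auto dest: nondec_path_appendD(2))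
  also have "\<dots> \<longleftrightarrow> (\<exists>q. length q = Suc k \<and> nondec_path V adj d (q @ p))"
  proof
    assume "\<exists>x q. length q = k \<and> nondec_path V adj d (q @ x # p)"
    then obtain x q where "length q = k" "nondec_path V adj d (q @ x # p)" by blast
    then show "\<exists>q. length q = Suc k \<and> nondec_path V adj d (q @ p)"
      by (intro exI[of _ "q @ [x]"]) simp
  next
    assume "\<exists>q. length q = Suc k \<and> nondec_path V adj d (q @ p)"
    then obtain q where q: "length q = Suc k" "nondec_path V adj d (q @ p)" by blast
    then obtain ys y where "q = ys @ [y]" by (metis length_Suc_conv_rev)
    with q show "\<exists>x q. length q = k \<and> nondec_path V adj d (q @ x # p)" by auto
  qed
  finally show ?case .
qed simp

abbreviation has_nondec_path :: "'a list \<Rightarrow> ('a \<Rightarrow> 'a \<Rightarrow> bool) \<Rightarrow> ('a \<Rightarrow> nat) \<Rightarrow> nat \<Rightarrow> bool" where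
  "has_nondec_path V adj d k \<equiv> extendable V adj d k []"

lemma has_nondec_path_iff: "has_nondec_path V adj d k \<longleftrightarrow> (\<exists>p. length p = k \<and> nondec_path V adj d p)"
  using extendable_iff[of V adj d "[]" k] by simp

abbreviation adjacent :: "nat set set \<Rightarrow> nat \<Rightarrow> nat \<Rightarrow> bool" where
  "adjacent E u v \<equiv> {u, v} \<in> E"

lemma degree_monotone_path_iff:
  "degree_monotone_path n E xs \<longleftrightarrow>
     nondec_path [0..<n] (adjacent E) (deg E) xs \<or> nondec_path [0..<n] (adjacent E) (deg E) (rev xs)"
proof -
  have path: "is_path n E xs \<longleftrightarrow> distinct xs \<and> set xs \<subseteq> set [0..<n] \<and> successively (adjacent E) xs"
    unfolding is_path_def successively_conv_nth by simp
  have "successively (adjacent E) (rev xs) \<longleftrightarrow> successively (adjacent E) xs"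
    unfolding successively_rev by (simp only: insert_commute)
  then show ?thesis
    unfolding degree_monotone_path_def path nondec_path_def by (auto simp: rev_map)
qed

lemma finite_degree_monotone_path_lengths: "finite (length ` {xs. degree_monotone_path n E xs})"
proof -
  have "length xs \<le> n" if "degree_monotone_path n E xs" for xs
    using that distinct_card[of xs] card_mono[of "{0..<n}" "set xs"]
    by (simp add: degree_monotone_path_def is_path_def)
  then have "length ` {xs. degree_monotone_path n E xs} \<subseteq> {..n}"
    by auto
  then show ?thesis
    by (rule finite_subset) simp
qed

lemma length_le_mp:
  assumes "nondec_path [0..<n] (adjacent E) (deg E) p"
  shows "length p \<le> mp n E"
  using assms finite_degree_monotone_path_lengths degree_monotone_path_iff
  unfolding mp_def by (blast intro: Max_ge)

lemma mp_less:
  assumes "\<not> has_nondec_path [0..<n] (adjacent E) (deg E) k"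
  shows "mp n E < k"
proof -
  have short: "length xs < k" if "degree_monotone_path n E xs" for xs
  proof (rule ccontr)
    assume "\<not> length xs < k"
    obtain p where p: "nondec_path [0..<n] (adjacent E) (deg E) p" "length p = length xs"
      using \<open>degree_monotone_path n E xs\<close> unfolding degree_monotone_path_iff
      by (elim disjE) (auto intro: that[of xs] that[of "rev xs"])
    then have "nondec_path [0..<n] (adjacent E) (deg E) (take k p)"
      using nondec_path_appendD(1)[of _ _ _ "take k p" "drop k p"] by simp
    moreover have "length (take k p) = k"
      using p(2) \<open>\<not> length xs < k\<close> by simp
    ultimately show False
      using assms has_nondec_path_iff by blast
  qed
  have "degree_monotone_path n E []"
    by (simp add: degree_monotone_path_iff)
  then have "length ` {xs. degree_monotone_path n E xs} \<noteq> {}"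
    by blast
  moreover have "\<forall>l \<in> length ` {xs. degree_monotone_path n E xs}. l < k"
    using short by blast
  ultimately show ?thesis
    unfolding mp_def by (intro iffD2[OF Max_less_iff] finite_degree_monotone_path_lengths)
qed

lemma deg_insert_edge:
  assumes "finite E" and "{u, v} \<notin> E" and "u \<noteq> v"
  shows "deg (insert {u, v} E) w = deg E w + (if w = u \<or> w = v then 1 else 0)"
proof -
  have "inj (\<lambda>x. {x, w})"
    by (auto simp: inj_on_def doubleton_eq_iff)
  then have "finite {x. {x, w} \<in> E}"
    using finite_vimageI[OF assms(1)] by (simp add: vimage_def)
  moreover have "{x. {x, w} \<in> insert {u, v} E} =
      {x. {x, w} \<in> E} \<union> (if w = u then {v} else if w = v then {u} else {})"
    using assms(3) by (auto simp: doubleton_eq_iff)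
  moreover have "w = u \<Longrightarrow> {v, w} \<notin> E" "w = v \<Longrightarrow> {u, w} \<notin> E"
    using assms(2) by (auto simp: insert_commute)
  ultimately show ?thesis
    unfolding deg_def using assms(3) by auto
qed

lemma has_nondec_path_embed:
  assumes "has_nondec_path V adj d k" and "inj_on f (set V)" and "f ` set V \<subseteq> set W"
    and "\<And>x y. x \<in> set V \<Longrightarrow> y \<in> set V \<Longrightarrow> adj x y \<Longrightarrow> adj' (f x) (f y)"
    and "\<And>x. x \<in> set V \<Longrightarrow> d' (f x) = d x"
  shows "has_nondec_path W adj' d' k"
proof -
  obtain p where p: "length p = k" "nondec_path V adj d p"
    using assms(1) has_nondec_path_iff by blast
  have sub: "set p \<subseteq> set V"
    using p(2) by (simp add: nondec_path_def)
  have "nondec_path W adj' d' (map f p)"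
  proof (rule nondec_path_map[OF p(2)])
    show "inj_on f (set p)"
      using assms(2) sub by (rule inj_on_subset)
    show "f ` set p \<subseteq> set W"
      using assms(3) sub by blast
    show "adj' (f x) (f y)" if "x \<in> set p" "y \<in> set p" "adj x y" for x y
      using assms(4) that sub by blast
    show "d' (f x) = d x" if "x \<in> set p" for x
      using assms(5) that sub by blast
  qed
  then show ?thesis
    using p(1) has_nondec_path_iff by fastforce
qed

datatype block = K4 | K5_minus_edge | C6_diameter

fun block_size :: "block \<Rightarrow> nat" where
  "block_size K4 = 4"
| "block_size K5_minus_edge = 5"
| "block_size C6_diameter = 6"

text \<open>\<open>K5_minus_edge\<close> lacks the edge \<open>{3, 4}\<close>; \<open>C6_diameter\<close> is the
  hexagon \<open>0-2-4-1-5-3-0\<close> together with its diagonal \<open>{0, 1}\<close>.\<close>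

fun block_edges :: "block \<Rightarrow> (nat \<times> nat) list" where
  "block_edges K4 = [(0,1), (0,2), (0,3), (1,2), (1,3), (2,3)]"
| "block_edges K5_minus_edge = [(0,1), (0,2), (0,3), (0,4), (1,2), (1,3), (1,4), (2,3), (2,4)]"
| "block_edges C6_diameter = [(0,1), (0,2), (0,3), (1,4), (1,5), (2,4), (3,5)]"

definition block_adj :: "block \<Rightarrow> nat \<Rightarrow> nat \<Rightarrow> bool" where
  "block_adj B x y \<longleftrightarrow> (x, y) \<in> set (block_edges B) \<or> (y, x) \<in> set (block_edges B)"

text \<open>The degree table is checked against \<open>block_edges\<close> by \<open>block_deg_eq_card\<close>;
  tabulating it keeps the exhaustive searches below fast.\<close>

fun block_deg :: "block \<Rightarrow> nat \<Rightarrow> nat" where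
  "block_deg K4 x = 3"
| "block_deg K5_minus_edge x = (if x < 3 then 4 else 3)"
| "block_deg C6_diameter x = (if x < 2 then 3 else 2)"

lemma block_adj_sym: "block_adj B x y \<longleftrightarrow> block_adj B y x"
  unfolding block_adj_def by blast

lemma block_adj_irrefl: "\<not> block_adj B x x"
  by (cases B) (auto simp: block_adj_def)

lemma block_adj_less: "block_adj B x y \<Longrightarrow> x < block_size B \<and> y < block_size B"
  by (cases B) (auto simp: block_adj_def)

lemma block_deg_eq_card:
  assumes "x < block_size B"
  shows "block_deg B x = card {y. y < block_size B \<and> block_adj B x y}"
proof -
  have "list_all (\<lambda>x. block_deg B x = length (filter (block_adj B x) [0..<block_size B]))
      [0..<block_size B]"
    by (induction B) code_simp+
  then have "block_deg B x = length (filter (block_adj B x) [0..<block_size B])"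
    using assms by (simp add: list_all_iff)
  moreover have "set (filter (block_adj B x) [0..<block_size B]) = {y. y < block_size B \<and> block_adj B x y}"
    by auto
  ultimately show ?thesis
    using distinct_card[of "filter (block_adj B x) [0..<block_size B]"] by simp
qed

lemma block_has_no_nondec_path: "\<not> has_nondec_path [0..<block_size B] (block_adj B) (block_deg B) 5"
  by (induction B) code_simp+

text \<open>Two blocks joined by one extra edge \<open>{p, q}\<close>: vertex \<open>(s, x)\<close> is vertex \<open>x\<close> of the
  first block if \<open>\<not> s\<close> and of the second block if \<open>s\<close>. Using only the first copy
  gives a single block plus an edge.\<close>

definition block_copy :: "bool \<Rightarrow> block \<Rightarrow> (bool \<times> nat) list" where
  "block_copy s B = map (Pair s) [0..<block_size B]"

definition joined_adj :: "block \<Rightarrow> block \<Rightarrow> bool \<times> nat \<Rightarrow> bool \<times> nat \<Rightarrow> bool \<times> nat \<Rightarrow> bool \<times> nat \<Rightarrow> bool" where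
  "joined_adj B1 B2 p q x y \<longleftrightarrow>
     (fst x = fst y \<and> block_adj (if fst x then B2 else B1) (snd x) (snd y))
     \<or> (x = p \<and> y = q) \<or> (x = q \<and> y = p)"

definition joined_deg :: "block \<Rightarrow> block \<Rightarrow> bool \<times> nat \<Rightarrow> bool \<times> nat \<Rightarrow> bool \<times> nat \<Rightarrow> nat" where
  "joined_deg B1 B2 p q x =
     block_deg (if fst x then B2 else B1) (snd x) + (if x = p \<or> x = q then 1 else 0)"

lemma joined_blocks_have_nondec_path:
  assumes "a < block_size B1" and "b < block_size B2"
  shows "has_nondec_path (block_copy False B1 @ block_copy True B2)
    (joined_adj B1 B2 (False, a) (True, b)) (joined_deg B1 B2 (False, a) (True, b)) 5"
proof -
  have "list_all (\<lambda>a. list_all (\<lambda>b. has_nondec_path (block_copy False B1 @ block_copy True B2)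
      (joined_adj B1 B2 (False, a) (True, b)) (joined_deg B1 B2 (False, a) (True, b)) 5)
      [0..<block_size B2]) [0..<block_size B1]"
    by (induction B1; induction B2) code_simp+
  then show ?thesis
    using assms by (simp add: list_all_iff)
qed

lemma block_plus_edge_has_nondec_path:
  assumes "a < block_size B" and "b < block_size B" and "a \<noteq> b" and "\<not> block_adj B a b"
  shows "has_nondec_path (block_copy False B)
    (joined_adj B B (False, a) (False, b)) (joined_deg B B (False, a) (False, b)) 5"
proof -
  have "list_all (\<lambda>a. list_all (\<lambda>b. a \<noteq> b \<and> \<not> block_adj B a b \<longrightarrow>
      has_nondec_path (block_copy False B)
        (joined_adj B B (False, a) (False, b)) (joined_deg B B (False, a) (False, b)) 5)
      [0..<block_size B]) [0..<block_size B]"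
    by (induction B) code_simp+
  then show ?thesis
    using assms by (simp add: list_all_iff)
qed

definition offset :: "block list \<Rightarrow> nat \<Rightarrow> nat" where
  "offset Bs i = sum_list (map block_size (take i Bs))"

abbreviation total_size :: "block list \<Rightarrow> nat" where
  "total_size Bs \<equiv> sum_list (map block_size Bs)"

fun block_pos :: "block list \<Rightarrow> nat \<Rightarrow> nat \<times> nat" where
  "block_pos [] v = (0, v)"
| "block_pos (B # Bs) v =
     (if v < block_size B then (0, v) else apfst Suc (block_pos Bs (v - block_size B)))"

lemma block_pos_offset:
  assumes "i < length Bs" and "a < block_size (Bs ! i)"
  shows "block_pos Bs (offset Bs i + a) = (i, a)"
  using assms
proof (induction Bs arbitrary: i)
  case (Cons B Bs)
  then show ?case
    by (cases i) (auto simp: offset_def)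
qed simp

lemma offset_add_less:
  assumes "i < length Bs" and "a < block_size (Bs ! i)"
  shows "offset Bs i + a < total_size Bs"
  using assms
proof (induction Bs arbitrary: i)
  case (Cons B Bs)
  then show ?case
    by (cases i) (auto simp: offset_def)
qed simp

lemma block_pos_less:
  assumes "v < total_size Bs" and "block_pos Bs v = (i, a)"
  shows "i < length Bs \<and> a < block_size (Bs ! i) \<and> offset Bs i + a = v"
  using assms
proof (induction Bs arbitrary: v i)
  case (Cons B Bs)
  show ?case
  proof (cases "v < block_size B")
    case True
    with Cons.prems show ?thesis
      by (auto simp: offset_def)
  next
    case False
    then obtain j where j: "block_pos Bs (v - block_size B) = (j, a)" "i = Suc j"
      using Cons.prems(2) by (cases "block_pos Bs (v - block_size B)") auto
    moreover have "v - block_size B < total_size Bs"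
      using Cons.prems(1) False by simp
    ultimately show ?thesis
      using Cons.IH[of "v - block_size B" j] False by (auto simp: offset_def)
  qed
qed simp

lemma block_pos_inj:
  assumes "u < total_size Bs" and "v < total_size Bs" and "block_pos Bs u = block_pos Bs v"
  shows "u = v"
proof -
  obtain i a where u: "block_pos Bs u = (i, a)"
    by (cases "block_pos Bs u")
  with assms(3) have "block_pos Bs v = (i, a)"
    by simp
  then show ?thesis
    using block_pos_less[OF assms(1) u] block_pos_less[OF assms(2)] by simp
qed

definition union_edges :: "block list \<Rightarrow> nat set set" where
  "union_edges Bs = (\<Union>i<length Bs.
     (\<lambda>(a, b). {offset Bs i + a, offset Bs i + b}) ` set (block_edges (Bs ! i)))"

lemma mem_union_edges:
  "e \<in> union_edges Bs \<longleftrightarrow> (\<exists>i a b. i < length Bs \<and> block_adj (Bs ! i) a b \<and> e = {offset Bs i + a, offset Bs i + b})"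
  unfolding union_edges_def block_adj_def by (auto simp: insert_commute)

lemma finite_union_edges: "finite (union_edges Bs)"
  by (simp add: union_edges_def)

lemma card_union_edges: "card (union_edges Bs) \<le> sum_list (map (length \<circ> block_edges) Bs)"
proof -
  have "card (union_edges Bs) \<le> (\<Sum>i<length Bs.
      card ((\<lambda>(a, b). {offset Bs i + a, offset Bs i + b}) ` set (block_edges (Bs ! i))))"
    unfolding union_edges_def by (rule card_UN_le) simp
  also have "\<dots> \<le> (\<Sum>i<length Bs. length (block_edges (Bs ! i)))"
    by (intro sum_mono order.trans[OF card_image_le card_length]) simp
  also have "\<dots> = sum_list (map (length \<circ> block_edges) Bs)"
    by (simp add: sum_list_sum_nth atLeast0LessThan)
  finally show ?thesis .
qed

lemma simple_graph_union_edges: "simple_graph (total_size Bs) (union_edges Bs)"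
  unfolding simple_graph_def
proof
  fix e assume "e \<in> union_edges Bs"
  then obtain i a b where i: "i < length Bs" and ab: "block_adj (Bs ! i) a b"
    and e: "e = {offset Bs i + a, offset Bs i + b}"
    by (auto simp: mem_union_edges)
  have "a \<noteq> b"
    using ab block_adj_irrefl by blast
  moreover have "offset Bs i + a < total_size Bs" "offset Bs i + b < total_size Bs"
    using i ab block_adj_less offset_add_less by blast+
  ultimately show "\<exists>u v. e = {u, v} \<and> u \<noteq> v \<and> u < total_size Bs \<and> v < total_size Bs"
    using e by (intro exI[of _ "offset Bs i + a"] exI[of _ "offset Bs i + b"]) simp
qed

lemma union_edges_less:
  assumes "{u, v} \<in> union_edges Bs"
  shows "u < total_size Bs"
proof -
  obtain x y where "{u, v} = {x, y}" "x < total_size Bs" "y < total_size Bs"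
    using assms simple_graph_union_edges[of Bs] unfolding simple_graph_def by blast
  moreover have "u \<in> {u, v}"
    by simp
  ultimately show ?thesis
    by auto
qed

lemma adjacent_union_edges:
  assumes "u < total_size Bs" and "v < total_size Bs"
    and "block_pos Bs u = (i, a)" and "block_pos Bs v = (j, b)"
  shows "{u, v} \<in> union_edges Bs \<longleftrightarrow> i = j \<and> block_adj (Bs ! i) a b"
proof
  assume "{u, v} \<in> union_edges Bs"
  then obtain k x y where k: "k < length Bs" and xy: "block_adj (Bs ! k) x y"
    and uv: "{u, v} = {offset Bs k + x, offset Bs k + y}"
    by (auto simp: mem_union_edges)
  have pos: "block_pos Bs (offset Bs k + x) = (k, x)" "block_pos Bs (offset Bs k + y) = (k, y)"
    using k xy block_adj_less block_pos_offset by blast+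
  from uv consider "u = offset Bs k + x" "v = offset Bs k + y" | "u = offset Bs k + y" "v = offset Bs k + x"
    by (auto simp: doubleton_eq_iff)
  then show "i = j \<and> block_adj (Bs ! i) a b"
    by cases (use pos xy assms(3,4) block_adj_sym in auto)
next
  assume ij: "i = j \<and> block_adj (Bs ! i) a b"
  have "i < length Bs" "u = offset Bs i + a" "v = offset Bs i + b"
    using block_pos_less[OF assms(1,3)] block_pos_less[OF assms(2,4)] ij by auto
  with ij show "{u, v} \<in> union_edges Bs"
    by (auto simp: mem_union_edges)
qed

lemma deg_union_edges:
  assumes "v < total_size Bs" and "block_pos Bs v = (i, a)"
  shows "deg (union_edges Bs) v = block_deg (Bs ! i) a"
proof -
  have i: "i < length Bs" "a < block_size (Bs ! i)" "offset Bs i + a = v"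
    using block_pos_less[OF assms] by auto
  have "{u. {u, v} \<in> union_edges Bs} =
      (\<lambda>y. offset Bs i + y) ` {y. y < block_size (Bs ! i) \<and> block_adj (Bs ! i) a y}"
  proof (intro equalityI subsetI)
    fix u
    assume "u \<in> {u. {u, v} \<in> union_edges Bs}"
    then have uv: "{u, v} \<in> union_edges Bs"
      by simp
    then have u: "u < total_size Bs"
      by (rule union_edges_less)
    obtain j b where ub: "block_pos Bs u = (j, b)"
      by (cases "block_pos Bs u")
    have "j = i" "block_adj (Bs ! i) a b"
      using adjacent_union_edges[OF u assms(1) ub assms(2)] uv block_adj_sym by auto
    moreover have "offset Bs j + b = u"
      using block_pos_less[OF u ub] by simp
    ultimately show "u \<in> (\<lambda>y. offset Bs i + y) ` {y. y < block_size (Bs ! i) \<and> block_adj (Bs ! i) a y}"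
      using block_adj_less by blast
  next
    fix u
    assume "u \<in> (\<lambda>y. offset Bs i + y) ` {y. y < block_size (Bs ! i) \<and> block_adj (Bs ! i) a y}"
    then obtain y where y: "y < block_size (Bs ! i)" "block_adj (Bs ! i) a y" "u = offset Bs i + y"
      by blast
    have "u < total_size Bs" "block_pos Bs u = (i, y)"
      using offset_add_less[OF i(1) y(1)] block_pos_offset[OF i(1) y(1)] y(3) by simp_all
    then show "u \<in> {u. {u, v} \<in> union_edges Bs}"
      using adjacent_union_edges[OF _ assms(1) _ assms(2)] y(2) block_adj_sym by simp
  qed
  then have "deg (union_edges Bs) v = card {y. y < block_size (Bs ! i) \<and> block_adj (Bs ! i) a y}"
    unfolding deg_def by (simp add: card_image)
  then show ?thesis
    using block_deg_eq_card[OF i(2)] by simp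
qed

lemma successively_imp_eq_hd:
  assumes "successively R xs" and "\<And>x y. x \<in> set xs \<Longrightarrow> y \<in> set xs \<Longrightarrow> R x y \<Longrightarrow> g x = g y"
    and "x \<in> set xs"
  shows "g x = g (hd xs)"
  using assms
proof (induction xs)
  case (Cons y ys)
  show ?case
  proof (cases "x = y")
    case False
    with Cons.prems have "ys \<noteq> []" "g x = g (hd ys)" "R y (hd ys)"
      using Cons.IH by (auto simp: successively_Cons)
    moreover have "g y = g (hd ys)"
      using Cons.prems(2)[of y "hd ys"] calculation by simp
    ultimately show ?thesis
      by simp
  qed simp
qed simp

lemma mp_union_edges_less: "mp (total_size Bs) (union_edges Bs) < 5"
proof (rule mp_less, rule notI)
  let ?E = "union_edges Bs" and ?N = "total_size Bs"
  assume "has_nondec_path [0..<?N] (adjacent ?E) (deg ?E) 5"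
  then obtain p where len: "length p = 5" and p: "nondec_path [0..<?N] (adjacent ?E) (deg ?E) p"
    by (auto simp: has_nondec_path_iff)
  have vert: "x < ?N" if "x \<in> set p" for x
    using p that by (auto simp: nondec_path_def)
  define i where "i = fst (block_pos Bs (hd p))"
  have "fst (block_pos Bs x) = i" if "x \<in> set p" for x
    unfolding i_def
  proof (rule successively_imp_eq_hd[OF _ _ that])
    show "successively (adjacent ?E) p"
      using p by (simp add: nondec_path_def)
    show "fst (block_pos Bs x) = fst (block_pos Bs y)" if "x \<in> set p" "y \<in> set p" "adjacent ?E x y" for x y
      using adjacent_union_edges[OF vert[OF that(1)] vert[OF that(2)]] that(3) by (metis prod.collapse)
  qed
  then have pos: "block_pos Bs x = (i, snd (block_pos Bs x))" if "x \<in> set p" for x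
    using that by (simp add: prod_eq_iff)
  have "nondec_path [0..<block_size (Bs ! i)] (block_adj (Bs ! i)) (block_deg (Bs ! i))
      (map (snd \<circ> block_pos Bs) p)"
  proof (rule nondec_path_map[OF p])
    show "inj_on (snd \<circ> block_pos Bs) (set p)"
      using pos vert block_pos_inj by (intro inj_onI) (metis comp_apply)
    show "(snd \<circ> block_pos Bs) ` set p \<subseteq> set [0..<block_size (Bs ! i)]"
      using pos vert block_pos_less by fastforce
    show "block_adj (Bs ! i) ((snd \<circ> block_pos Bs) x) ((snd \<circ> block_pos Bs) y)"
      if "x \<in> set p" "y \<in> set p" "adjacent ?E x y" for x y
      using adjacent_union_edges[OF vert[OF that(1)] vert[OF that(2)] pos[OF that(1)] pos[OF that(2)]] that(3)
      by simp
    show "block_deg (Bs ! i) ((snd \<circ> block_pos Bs) x) = deg ?E x" if "x \<in> set p" for x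
      using deg_union_edges[OF vert[OF that] pos[OF that]] by simp
  qed
  then show False
    using block_has_no_nondec_path[of "Bs ! i"] len has_nondec_path_iff by fastforce
qed

definition joined_verts :: "block list \<Rightarrow> nat \<Rightarrow> nat \<Rightarrow> (bool \<times> nat) list" where
  "joined_verts Bs i j = block_copy False (Bs ! i) @ (if i = j then [] else block_copy True (Bs ! j))"

definition embed :: "block list \<Rightarrow> nat \<Rightarrow> nat \<Rightarrow> bool \<times> nat \<Rightarrow> nat" where
  "embed Bs i j z = offset Bs (if fst z then j else i) + snd z"

lemma block_pos_embed:
  assumes "i < length Bs" and "j < length Bs" and "z \<in> set (joined_verts Bs i j)"
  shows "embed Bs i j z < total_size Bs \<and> block_pos Bs (embed Bs i j z) = (if fst z then j else i, snd z)"
  using assms offset_add_less block_pos_offset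
  by (auto simp: joined_verts_def embed_def block_copy_def split: if_splits)

lemma inj_on_embed:
  assumes "i < length Bs" and "j < length Bs"
  shows "inj_on (embed Bs i j) (set (joined_verts Bs i j))"
proof (rule inj_onI)
  fix z z'
  assume z: "z \<in> set (joined_verts Bs i j)" "z' \<in> set (joined_verts Bs i j)"
    and "embed Bs i j z = embed Bs i j z'"
  then have "(if fst z then j else i, snd z) = (if fst z' then j else i, snd z')"
    using block_pos_embed[OF assms] by metis
  moreover have "i \<noteq> j" if "fst z \<or> fst z'"
    using z that by (auto simp: joined_verts_def block_copy_def split: if_splits)
  ultimately show "z = z'"
    by (auto simp: prod_eq_iff split: if_splits)
qed

lemma joined_verts_have_nondec_path:
  assumes u: "u < total_size Bs" and v: "v < total_size Bs" and "u \<noteq> v"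
    and nonadj: "{u, v} \<notin> union_edges Bs"
    and pu: "block_pos Bs u = (i, a)" and pv: "block_pos Bs v = (j, b)"
  shows "has_nondec_path (joined_verts Bs i j)
    (joined_adj (Bs ! i) (Bs ! j) (False, a) (i \<noteq> j, b)) (joined_deg (Bs ! i) (Bs ! j) (False, a) (i \<noteq> j, b)) 5"
proof (cases "i = j")
  case True
  have "a < block_size (Bs ! i)" "b < block_size (Bs ! i)" "a \<noteq> b"
    using block_pos_less[OF u pu] block_pos_less[OF v pv] \<open>u \<noteq> v\<close> True by auto
  moreover have "\<not> block_adj (Bs ! i) a b"
    using nonadj adjacent_union_edges[OF u v pu pv] True by simp
  ultimately show ?thesis
    using block_plus_edge_has_nondec_path True by (simp add: joined_verts_def)
next
  case False
  then show ?thesis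
    using joined_blocks_have_nondec_path block_pos_less[OF u pu] block_pos_less[OF v pv]
    by (simp add: joined_verts_def)
qed

lemma mp_union_edges_insert:
  assumes u: "u < total_size Bs" and v: "v < total_size Bs" and "u \<noteq> v"
    and nonadj: "{u, v} \<notin> union_edges Bs"
  shows "5 \<le> mp (total_size Bs) (insert {u, v} (union_edges Bs))"
proof -
  let ?E = "union_edges Bs" and ?N = "total_size Bs"
  let ?E' = "insert {u, v} ?E"
  obtain i a j b where pu: "block_pos Bs u = (i, a)" and pv: "block_pos Bs v = (j, b)"
    by (metis surj_pair)
  have ij: "i < length Bs" "j < length Bs"
    using block_pos_less[OF u pu] block_pos_less[OF v pv] by auto
  let ?V = "joined_verts Bs i j" and ?q = "(i \<noteq> j, b)" and ?f = "embed Bs i j"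
  note pos = block_pos_embed[OF ij]
  have ends: "(False, a) \<in> set ?V" "?q \<in> set ?V" "?f (False, a) = u" "?f ?q = v"
    using block_pos_less[OF u pu] block_pos_less[OF v pv]
    by (auto simp: joined_verts_def embed_def block_copy_def)
  have "has_nondec_path [0..<?N] (adjacent ?E') (deg ?E') 5"
  proof (rule has_nondec_path_embed[OF joined_verts_have_nondec_path[OF assms pu pv] inj_on_embed[OF ij]])
    show "?f ` set ?V \<subseteq> set [0..<?N]"
      using pos by auto
    show "adjacent ?E' (?f x) (?f y)"
      if "x \<in> set ?V" "y \<in> set ?V" "joined_adj (Bs ! i) (Bs ! j) (False, a) ?q x y" for x y
      using that(3) unfolding joined_adj_def
    proof (elim disjE conjE)
      assume "fst x = fst y" and "block_adj (if fst x then Bs ! j else Bs ! i) (snd x) (snd y)"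
      then show ?thesis
        using adjacent_union_edges pos[OF that(1)] pos[OF that(2)] by auto
    qed (use ends in \<open>auto simp: insert_commute\<close>)
    show "deg ?E' (?f x) = joined_deg (Bs ! i) (Bs ! j) (False, a) ?q x" if "x \<in> set ?V" for x
    proof -
      have "?f x = u \<longleftrightarrow> x = (False, a)" "?f x = v \<longleftrightarrow> x = ?q"
        using inj_on_embed[OF ij] that ends by (auto dest: inj_onD)
      then show ?thesis
        using deg_insert_edge[OF finite_union_edges nonadj \<open>u \<noteq> v\<close>] deg_union_edges pos[OF that]
        by (auto simp: joined_deg_def)
    qed
  qed
  then obtain p where "length p = 5" "nondec_path [0..<?N] (adjacent ?E') (deg ?E') p"
    by (auto simp: has_nondec_path_iff)
  then show ?thesis
    using length_le_mp by metis
qed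

lemma union_edges_saturated: "saturated 5 (total_size Bs) (union_edges Bs)"
  unfolding saturated_def
  using simple_graph_union_edges mp_union_edges_less[of Bs] mp_union_edges_insert[of _ Bs]
  by simp

definition prefix_blocks :: "nat \<Rightarrow> block list" where
  "prefix_blocks r =
     (if r = 1 then [K4, K4, K5_minus_edge] else if r = 2 then [K4, K4]
      else if r = 3 then [K4, K5_minus_edge] else if r = 4 then [K4]
      else if r = 5 then [K5_minus_edge] else [])"

definition construction :: "nat \<Rightarrow> block list" where
  "construction n = prefix_blocks (n mod 6) @
     replicate ((n - total_size (prefix_blocks (n mod 6))) div 6) C6_diameter"

lemma total_size_prefix_blocks:
  shows "total_size (prefix_blocks r) \<le> (if r = 1 then 13 else r + 6)"
    and "r < 6 \<Longrightarrow> total_size (prefix_blocks r) mod 6 = r"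
  by (auto simp: prefix_blocks_def)

lemma card_edges_prefix_blocks:
  assumes "r < 6"
  shows "6 * sum_list (map (length \<circ> block_edges) (prefix_blocks r)) \<le> 7 * total_size (prefix_blocks r) + c r"
  using assms by (auto simp: prefix_blocks_def c_def)

lemma total_size_construction:
  assumes "8 \<le> n"
  shows "total_size (construction n) = n"
proof -
  let ?P = "total_size (prefix_blocks (n mod 6))"
  have "n mod 6 + 6 \<le> n" "n mod 6 = 1 \<Longrightarrow> 13 \<le> n"
    using assms by presburger+
  then have "?P \<le> n"
    using total_size_prefix_blocks(1)[of "n mod 6"] assms by (auto split: if_splits)
  moreover have "?P mod 6 = n mod 6"
    by (simp add: total_size_prefix_blocks(2))
  ultimately have "(n - ?P) div 6 * 6 = n - ?P"
    by (metis mod_eq_dvd_iff_nat dvd_div_mult_self)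
  then show ?thesis
    using \<open>?P \<le> n\<close> by (simp add: construction_def sum_list_replicate)
qed

lemma card_union_edges_construction:
  assumes "8 \<le> n"
  shows "6 * card (union_edges (construction n)) \<le> 7 * n + c (n mod 6)"
proof -
  let ?P = "prefix_blocks (n mod 6)" and ?m = "(n - total_size (prefix_blocks (n mod 6))) div 6"
  have "6 * card (union_edges (construction n)) \<le> 6 * sum_list (map (length \<circ> block_edges) ?P) + 42 * ?m"
    using card_union_edges[of "construction n"] by (simp add: construction_def sum_list_replicate)
  also have "\<dots> \<le> 7 * total_size ?P + c (n mod 6) + 42 * ?m"
    using card_edges_prefix_blocks[of "n mod 6"] by simp
  also have "\<dots> = 7 * total_size (construction n) + c (n mod 6)"
    by (simp add: construction_def sum_list_replicate)
  finally show ?thesis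
    using total_size_construction[OF assms] by simp
qed

lemma h_le_card:
  assumes "saturated k n E"
  shows "\<exists>m. h n k = enat m \<and> m \<le> card E"
proof -
  let ?S = "{enat (card E) | E. saturated k n E}"
  have E: "enat (card E) \<in> ?S"
    using assms by blast
  then have "Inf ?S \<in> ?S"
    unfolding Inf_enat_def by (auto intro: LeastI)
  moreover have "Inf ?S \<le> enat (card E)"
    using E by (rule Inf_lower)
  ultimately show ?thesis
    unfolding h_def by auto
qed

theorem proposition2p8:
  fixes n :: nat
  assumes "n \<ge> 8"
  shows "\<exists>m. h n 5 = enat m \<and> real m \<le> (7 * real n + real (c (n mod 6))) / 6"
proof -
  let ?E = "union_edges (construction n)"
  have "saturated 5 n ?E"
    using union_edges_saturated[of "construction n"] total_size_construction[OF assms] by simp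
  then obtain m where "h n 5 = enat m" and "m \<le> card ?E"
    using h_le_card by blast
  moreover have "6 * m \<le> 7 * n + c (n mod 6)"
    using \<open>m \<le> card ?E\<close> card_union_edges_construction[OF assms] by linarith
  ultimately show ?thesis
    by (intro exI[of _ m]) simp
qed

end
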